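(* Let $d\geq 2$. Suppose a finite bipartite graph $G$ with vertex classes $A$ and $B$ satisfies $|A|\geq d^6|B|$, $d_G(x,y)\leq d$ for all distinct $x,y\in B$, and $d_G(v)\leq d$ for every $v\in A$. Then $G$ contains a subgraph $G'$ which is $C_4$-free and has average degree at least $d(G)/5$.
   Context: $d(G)=2e(G)/|V(G)|$ is the average degree, $d_G(v)$ the degree of $v$, and the codegree $d_G(x,y)$ is the number of common neighbours of $x$ and $y$. A graph is $C_4$-free if it contains no $4$-cycle as a subgraph. *)

theory Defs
  imports Complex_Main
begin

definition graph :: "'a set \<Rightarrow> 'a set set \<Rightarrow> bool" where
  "graph V E \<longleftrightarrow> finite V \<and> (\<forall>e\<in>E. \<exists>x y. x \<noteq> y \<and> e = {x, y} \<and> x \<in> V \<and> y \<in> V)"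

definition nbrs :: "'a set set \<Rightarrow> 'a \<Rightarrow> 'a set" where
  "nbrs E v = {u. {v, u} \<in> E}"

definition degree :: "'a set set \<Rightarrow> 'a \<Rightarrow> nat" where
  "degree E v = card (nbrs E v)"

definition codegree :: "'a set set \<Rightarrow> 'a \<Rightarrow> 'a \<Rightarrow> nat" where
  "codegree E x y = card (nbrs E x \<inter> nbrs E y)"

text \<open>Average degree d(G) = 2 e(G) / |V(G)| (equal to 0 for the empty graph).\<close>
definition avg_degree :: "'a set \<Rightarrow> 'a set set \<Rightarrow> real" where
  "avg_degree V E = 2 * real (card E) / real (card V)"

definition bipartite_with :: "'a set \<Rightarrow> 'a set set \<Rightarrow> 'a set \<Rightarrow> 'a set \<Rightarrow> bool" where
  "bipartite_with V E A B \<longleftrightarrow> A \<inter> B = {} \<and> A \<union> B = V \<and>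
     (\<forall>e\<in>E. \<exists>a\<in>A. \<exists>b\<in>B. e = {a, b})"

definition subgraph :: "'a set \<Rightarrow> 'a set set \<Rightarrow> 'a set \<Rightarrow> 'a set set \<Rightarrow> bool" where
  "subgraph V' E' V E \<longleftrightarrow> graph V' E' \<and> V' \<subseteq> V \<and> E' \<subseteq> E"

definition C4_free :: "'a set set \<Rightarrow> bool" where
  "C4_free E \<longleftrightarrow> \<not> (\<exists>a b c d. distinct [a, b, c, d] \<and>
      {a, b} \<in> E \<and> {b, c} \<in> E \<and> {c, d} \<in> E \<and> {d, a} \<in> E)"

end

theory Submission
  imports Defs
begin

text \<open>Call two vertices of A conflicting if they have two common neighbours. A vertex of A has
  at most d^2 ordered pairs of neighbours, each with at most d common neighbours, so it conflicts
  with at most d^3 others. Weighting a in A by deg(a) - d(G)/10, a greedy choice of heaviest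
  vertices yields a conflict-free S with at least a 1/(d^3 + 1) share of the total weight, which is
  at least 4 e(G)/5. The edges at S form a C4-free graph on S and B, since a 4-cycle of a bipartite
  graph has two vertices of A with two common neighbours. Finally |A| \<ge> d^6 |B| makes the weight
  of S at least |B| d(G)/10, which says precisely that this graph has average degree at least
  d(G)/5.\<close>

lemma sum_closed_nbhd_le_heaviest:
  fixes w :: "'a \<Rightarrow> real" and R :: "'a \<Rightarrow> 'a \<Rightarrow> bool"
  assumes "finite X" and "a \<in> X" and "0 \<le> w a" and "\<And>x. x \<in> X \<Longrightarrow> w x \<le> w a"
    and "card {y\<in>X. R a y} \<le> D"
  shows "sum w {y\<in>X. y = a \<or> R a y} \<le> real (D + 1) * w a"
proof -
  have "card {y\<in>X. y = a \<or> R a y} \<le> card (insert a {y\<in>X. R a y})"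
    using assms(1) by (intro card_mono) auto
  also have "\<dots> \<le> D + 1"
    using assms(1,5) by (simp add: card_insert_if)
  finally have "real (card {y\<in>X. y = a \<or> R a y}) * w a \<le> real (D + 1) * w a"
    using assms(3) by (intro mult_right_mono) auto
  then show ?thesis
    using sum_bounded_above[of "{y\<in>X. y = a \<or> R a y}" w "w a"] assms(4) by fastforce
qed

lemma independent_subset_weight_bound:
  fixes w :: "'a \<Rightarrow> real" and R :: "'a \<Rightarrow> 'a \<Rightarrow> bool" and D :: nat
  assumes "finite X" and "\<And>x y. R x y \<Longrightarrow> R y x"
    and "\<And>x. x \<in> X \<Longrightarrow> card {y\<in>X. R x y} \<le> D"
  shows "\<exists>S\<subseteq>X. (\<forall>a\<in>S. \<forall>b\<in>S. a \<noteq> b \<longrightarrow> \<not> R a b) \<and> sum w X \<le> real (D + 1) * sum w S"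
  using assms(1,3)
proof (induction X rule: finite_psubset_induct)
  case (psubset X)
  show ?case
  proof (cases "\<forall>x\<in>X. w x < 0")
    case True
    then have "sum w X \<le> 0"
      by (simp add: less_imp_le sum_nonpos)
    then show ?thesis
      by (intro exI[of _ "{}"]) auto
  next
    case False
    then have "Max (w ` X) \<in> w ` X"
      using psubset.hyps by (intro Max_in) auto
    then obtain a where "a \<in> X" and "w a = Max (w ` X)"
      by (metis imageE)
    then have a_max: "\<And>x. x \<in> X \<Longrightarrow> w x \<le> w a"
      using psubset.hyps by simp
    define K where "K = {y\<in>X. y = a \<or> R a y}"
    have "0 \<le> w a"
      using False a_max by force
    then have K_weight: "sum w K \<le> real (D + 1) * w a"
      unfolding K_def using psubset \<open>a \<in> X\<close> a_max by (intro sum_closed_nbhd_le_heaviest) auto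
    have "X - K \<subset> X"
      using \<open>a \<in> X\<close> K_def by auto
    moreover have "card {y \<in> X - K. R x y} \<le> D" if "x \<in> X - K" for x
    proof -
      have "card {y \<in> X - K. R x y} \<le> card {y\<in>X. R x y}"
        using psubset.hyps by (intro card_mono) auto
      then show ?thesis
        using psubset.prems[of x] that by simp
    qed
    ultimately obtain S where S: "S \<subseteq> X - K" "\<forall>a\<in>S. \<forall>b\<in>S. a \<noteq> b \<longrightarrow> \<not> R a b"
      and S_weight: "sum w (X - K) \<le> real (D + 1) * sum w S"
      using psubset.IH by meson
    have "\<forall>x\<in>insert a S. \<forall>y\<in>insert a S. x \<noteq> y \<longrightarrow> \<not> R x y"
      using S assms(2) K_def by blast
    moreover have "sum w X = sum w K + sum w (X - K)"
      using sum.subset_diff[of K X w] psubset.hyps K_def by auto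
    moreover have "sum w (insert a S) = w a + sum w S"
      using S K_def psubset.hyps by (subst sum.insert) (auto intro: finite_subset)
    ultimately show ?thesis
      using S \<open>a \<in> X\<close> K_weight S_weight by (intro exI[of _ "insert a S"]) (auto simp: distrib_left)
  qed
qed

text \<open>In the application e, n, m are e(G), |A|, |B|; s and t are |S| and the number of edges
  at S; K = d^3 + 1; and c = d(G)/10.\<close>

lemma weight_bound_imp_density_bound:
  fixes e n m s t K c :: real
  assumes "0 < m" "0 \<le> n" "0 \<le> e" "0 < K" "K * m \<le> 4 * (n + m)"
    and c_def: "c = e / (5 * (n + m))"
    and weight: "e - c * n \<le> K * (t - c * s)"
  shows "c * (s + m) \<le> t"
proof -
  have "c * n \<le> e / 5"
    using assms(1-3) unfolding c_def by (simp add: field_simps mult_left_mono)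
  moreover have "K * (c * m) \<le> 4 * e / 5"
    using assms(1-3) mult_left_mono[OF assms(5) assms(3)] unfolding c_def by (simp add: field_simps)
  ultimately have "K * (c * m) \<le> K * (t - c * s)"
    using weight by linarith
  then have "c * m \<le> t - c * s"
    using assms(4) by (rule mult_left_le_imp_le)
  then show ?thesis
    by (simp add: algebra_simps)
qed

lemma nbrs_sym: "u \<in> nbrs E v \<longleftrightarrow> v \<in> nbrs E u"
  by (simp add: nbrs_def insert_commute)

lemma graph_nbrs_subset: "graph V E \<Longrightarrow> nbrs E v \<subseteq> V"
  unfolding graph_def nbrs_def by (fastforce simp: doubleton_eq_iff)

lemma graph_finite_nbrs: "graph V E \<Longrightarrow> finite (nbrs E v)"
  using graph_nbrs_subset graph_def finite_subset by metis

lemma graph_edges_containing: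
  assumes "graph V E"
  shows "{e\<in>E. v \<in> e} = (\<lambda>u. {v, u}) ` nbrs E v"
proof
  show "{e\<in>E. v \<in> e} \<subseteq> (\<lambda>u. {v, u}) ` nbrs E v"
  proof
    fix e assume "e \<in> {e\<in>E. v \<in> e}"
    moreover obtain x y where "e = {x, y}"
      using assms calculation unfolding graph_def by blast
    ultimately show "e \<in> (\<lambda>u. {v, u}) ` nbrs E v"
      unfolding nbrs_def by (auto simp: insert_commute)
  qed
qed (auto simp: nbrs_def)

lemma graph_card_edges_containing:
  assumes "graph V E"
  shows "card {e\<in>E. v \<in> e} = degree E v"
proof -
  have "inj_on (\<lambda>u. {v, u}) (nbrs E v)"
    by (auto simp: inj_on_def doubleton_eq_iff)
  then show ?thesis
    by (simp add: graph_edges_containing[OF assms] card_image degree_def)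
qed

definition incident_edges :: "'a set set \<Rightarrow> 'a set \<Rightarrow> 'a set set" where
  "incident_edges E S = {e\<in>E. e \<inter> S \<noteq> {}}"

definition share_two_nbrs :: "'a set set \<Rightarrow> 'a \<Rightarrow> 'a \<Rightarrow> bool" where
  "share_two_nbrs E a a' \<longleftrightarrow> (\<exists>u v. u \<noteq> v \<and> {u, v} \<subseteq> nbrs E a \<inter> nbrs E a')"

lemma share_two_nbrs_sym: "share_two_nbrs E a a' \<Longrightarrow> share_two_nbrs E a' a"
  unfolding share_two_nbrs_def by blast

locale bipartite_graph =
  fixes V A B :: "'a set" and E :: "'a set set"
  assumes graph: "graph V E" and bipartite: "bipartite_with V E A B"
begin

lemma A_union_B: "A \<union> B = V" and disjoint: "A \<inter> B = {}"
  using bipartite unfolding bipartite_with_def by auto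

lemma finite_A: "finite A" and finite_B: "finite B"
  using graph A_union_B unfolding graph_def by auto

lemma card_V: "card V = card A + card B"
  using A_union_B finite_A finite_B disjoint by (metis card_Un_disjoint)

lemma edgeE:
  assumes "e \<in> E"
  obtains a b where "a \<in> A" "b \<in> B" "e = {a, b}"
proof -
  have "\<forall>e\<in>E. \<exists>a\<in>A. \<exists>b\<in>B. e = {a, b}"
    using bipartite by (simp add: bipartite_with_def)
  then show ?thesis
    using assms that by blast
qed

lemma nbrs_subset_B: "a \<in> A \<Longrightarrow> nbrs E a \<subseteq> B"
  using disjoint by (fastforce simp: nbrs_def doubleton_eq_iff elim: edgeE)

lemma incident_edgeE:
  assumes "S \<subseteq> A" and "e \<in> incident_edges E S"
  obtains a b where "a \<in> S" "b \<in> B" "b \<in> nbrs E a" "e = {a, b}"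
proof -
  obtain a b where ab: "a \<in> A" "b \<in> B" "e = {a, b}" and "e \<in> E" "e \<inter> S \<noteq> {}"
    using assms(2) unfolding incident_edges_def by (blast elim: edgeE)
  then have "a \<in> S"
    using assms(1) disjoint by blast
  then show ?thesis
    using that ab \<open>e \<in> E\<close> by (simp add: nbrs_def)
qed

lemma card_incident_edges:
  assumes "S \<subseteq> A"
  shows "card (incident_edges E S) = (\<Sum>a\<in>S. degree E a)"
proof -
  have "incident_edges E S = (\<Union>a\<in>S. {e\<in>E. a \<in> e})"
    unfolding incident_edges_def by blast
  moreover have "{e\<in>E. a \<in> e} \<inter> {e\<in>E. a' \<in> e} = {}" if "a \<in> S" "a' \<in> S" "a \<noteq> a'" for a a'
    using that assms disjoint by (fastforce elim: edgeE)
  moreover have "finite S"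
    using assms finite_A finite_subset by blast
  ultimately show ?thesis
    using graph_card_edges_containing[OF graph] graph_edges_containing[OF graph]
      graph_finite_nbrs[OF graph] by (simp add: card_UN_disjoint)
qed

lemma sum_degree_diff:
  assumes "T \<subseteq> A"
  shows "(\<Sum>a\<in>T. real (degree E a) - c) = real (card (incident_edges E T)) - c * card T"
  using card_incident_edges[OF assms] by (simp add: sum_subtractf flip: of_nat_sum)

lemma incident_edges_A: "incident_edges E A = E"
  unfolding incident_edges_def by (fastforce elim: edgeE)

lemma subgraph_incident_edges:
  assumes "S \<subseteq> A"
  shows "subgraph (S \<union> B) (incident_edges E S) V E"
proof -
  have "finite S"
    using assms finite_A finite_subset by blast
  moreover have "\<exists>x y. x \<noteq> y \<and> e = {x, y} \<and> x \<in> S \<union> B \<and> y \<in> S \<union> B"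
    if "e \<in> incident_edges E S" for e
    using assms that
  proof (elim incident_edgeE)
    fix a b assume "a \<in> S" "b \<in> B" "e = {a, b}"
    moreover have "a \<noteq> b"
      using \<open>a \<in> S\<close> \<open>b \<in> B\<close> assms disjoint by blast
    ultimately show ?thesis by blast
  qed
  moreover have "S \<union> B \<subseteq> V"
    using assms A_union_B by blast
  ultimately show ?thesis
    unfolding subgraph_def graph_def incident_edges_def using finite_B by auto
qed

lemma C4_free_incident_edges:
  assumes "S \<subseteq> A" and no_share: "\<And>a a'. a \<in> S \<Longrightarrow> a' \<in> S \<Longrightarrow> a \<noteq> a' \<Longrightarrow> \<not> share_two_nbrs E a a'"
  shows "C4_free (incident_edges E S)"
  unfolding C4_free_def
proof
  assume "\<exists>p q r s. distinct [p, q, r, s] \<and> {p, q} \<in> incident_edges E S \<and>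
    {q, r} \<in> incident_edges E S \<and> {r, s} \<in> incident_edges E S \<and> {s, p} \<in> incident_edges E S"
  then obtain p q r s where "distinct [p, q, r, s]" and edges:
    "{p, q} \<in> incident_edges E S" "{q, r} \<in> incident_edges E S"
    "{r, s} \<in> incident_edges E S" "{s, p} \<in> incident_edges E S"
    by blast
  have "S \<inter> B = {}"
    using assms(1) disjoint by blast
  have side: "x \<in> S \<and> y \<in> nbrs E x \<and> y \<notin> S \<or> y \<in> S \<and> x \<in> nbrs E y \<and> x \<notin> S"
    if "{x, y} \<in> incident_edges E S" for x y
    using assms(1) that
    by (elim incident_edgeE) (use \<open>S \<inter> B = {}\<close> in \<open>auto simp: doubleton_eq_iff nbrs_sym\<close>)
  note sides = side[OF edges(1)] side[OF edges(2)] side[OF edges(3)] side[OF edges(4)]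
  show False
  proof (cases "p \<in> S")
    case True
    then have "r \<in> S" "{q, s} \<subseteq> nbrs E p \<inter> nbrs E r"
      using sides by blast+
    then show False
      using no_share[of p r] True \<open>distinct [p, q, r, s]\<close> unfolding share_two_nbrs_def by auto
  next
    case False
    then have "q \<in> S" "s \<in> S" "{p, r} \<subseteq> nbrs E q \<inter> nbrs E s"
      using sides by blast+
    then show False
      using no_share[of q s] \<open>distinct [p, q, r, s]\<close> unfolding share_two_nbrs_def by auto
  qed
qed

lemma share_two_nbrs_in_V:
  assumes "share_two_nbrs E x y"
  shows "y \<in> V"
proof -
  obtain u where "u \<in> nbrs E y"
    using assms unfolding share_two_nbrs_def by blast
  then have "y \<in> nbrs E u"
    by (simp add: nbrs_sym)
  then show ?thesis
    using graph_nbrs_subset[OF graph] by blast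
qed

lemma card_share_two_nbrs_le:
  assumes "x \<in> A" and "degree E x \<le> d"
    and codegree: "\<And>u v. u \<in> B \<Longrightarrow> v \<in> B \<Longrightarrow> u \<noteq> v \<Longrightarrow> codegree E u v \<le> d"
  shows "card {y. share_two_nbrs E x y} \<le> d ^ 3"
proof -
  define P where "P = {(u, v) \<in> nbrs E x \<times> nbrs E x. u \<noteq> v}"
  have "finite (nbrs E x)"
    using graph_finite_nbrs[OF graph] .
  moreover have "P \<subseteq> nbrs E x \<times> nbrs E x"
    unfolding P_def by blast
  ultimately have "finite P"
    by (simp add: finite_subset)
  have "card P \<le> card (nbrs E x \<times> nbrs E x)"
    using \<open>finite (nbrs E x)\<close> \<open>P \<subseteq> nbrs E x \<times> nbrs E x\<close> by (intro card_mono) auto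
  also have "\<dots> \<le> d * d"
    using assms(2) by (simp add: card_cartesian_product degree_def mult_mono)
  finally have "card P \<le> d * d" .
  have "{y. share_two_nbrs E x y} \<subseteq> (\<Union>(u, v)\<in>P. nbrs E u \<inter> nbrs E v)"
    unfolding P_def share_two_nbrs_def by (auto simp: nbrs_sym)
  then have "card {y. share_two_nbrs E x y} \<le> card (\<Union>(u, v)\<in>P. nbrs E u \<inter> nbrs E v)"
    using \<open>finite P\<close> graph_finite_nbrs[OF graph] by (intro card_mono) auto
  also have "\<dots> \<le> (\<Sum>(u, v)\<in>P. codegree E u v)"
    unfolding codegree_def using card_UN_le[OF \<open>finite P\<close>] by (simp add: case_prod_unfold)
  also have "\<dots> \<le> (\<Sum>(u, v)\<in>P. d)"
    using nbrs_subset_B[OF assms(1)] codegree unfolding P_def by (intro sum_mono) auto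
  also have "\<dots> \<le> d ^ 3"
    using \<open>card P \<le> d * d\<close> by (simp add: power3_eq_cube)
  finally show ?thesis .
qed

lemma exists_no_share_subset_weight_bound:
  fixes w :: "'a \<Rightarrow> real"
  assumes "\<And>a. a \<in> A \<Longrightarrow> degree E a \<le> d"
    and "\<And>u v. u \<in> B \<Longrightarrow> v \<in> B \<Longrightarrow> u \<noteq> v \<Longrightarrow> codegree E u v \<le> d"
  shows "\<exists>S\<subseteq>A. (\<forall>a\<in>S. \<forall>a'\<in>S. a \<noteq> a' \<longrightarrow> \<not> share_two_nbrs E a a') \<and>
    sum w A \<le> real (d ^ 3 + 1) * sum w S"
proof (rule independent_subset_weight_bound[OF finite_A share_two_nbrs_sym])
  fix x assume "x \<in> A"
  have "finite {y. share_two_nbrs E x y}"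
    using share_two_nbrs_in_V graph unfolding graph_def by (blast intro: finite_subset)
  then have "card {y\<in>A. share_two_nbrs E x y} \<le> card {y. share_two_nbrs E x y}"
    by (intro card_mono) auto
  also have "\<dots> \<le> d ^ 3"
    using card_share_two_nbrs_le[OF \<open>x \<in> A\<close> assms(1)[OF \<open>x \<in> A\<close>] assms(2)] .
  finally show "card {y\<in>A. share_two_nbrs E x y} \<le> d ^ 3" .
qed

lemma avg_degree_incident_edges_ge:
  fixes K :: nat
  assumes "S \<subseteq> A" and "0 < K" and "K * card B \<le> 4 * card V"
    and c_def: "c = real (card E) / (5 * real (card V))"
    and weight: "(\<Sum>a\<in>A. real (degree E a) - c) \<le> real K * (\<Sum>a\<in>S. real (degree E a) - c)"
  shows "avg_degree V E / 5 \<le> avg_degree (S \<union> B) (incident_edges E S)"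
proof (cases "B = {}")
  case True
  have "E = {}"
  proof (rule equals0I)
    fix e assume "e \<in> E"
    then show False
      by (rule edgeE) (use True in blast)
  qed
  then show ?thesis
    by (simp add: avg_degree_def)
next
  case False
  have "finite S" "S \<inter> B = {}"
    using assms(1) finite_A finite_subset disjoint by blast+
  then have card_SB: "card (S \<union> B) = card S + card B"
    using finite_B by (simp add: card_Un_disjoint)
  have "0 < card B"
    using False finite_B by auto
  have edges_S: "c * (real (card S) + real (card B)) \<le> real (card (incident_edges E S))"
  proof (rule weight_bound_imp_density_bound[where n = "card A" and e = "card E" and K = K])
    show "real K * real (card B) \<le> 4 * (real (card A) + real (card B))"
      using assms(3) card_V by (simp flip: of_nat_mult)
    show "real (card E) - c * real (card A) \<le>
        real K * (real (card (incident_edges E S)) - c * real (card S))"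
      using weight sum_degree_diff[of A c] sum_degree_diff[OF assms(1), of c] incident_edges_A
      by simp
  qed (use \<open>0 < card B\<close> assms(2) c_def card_V in auto)
  have "avg_degree V E / 5 = 2 * c"
    unfolding avg_degree_def c_def by simp
  also have "\<dots> \<le> 2 * real (card (incident_edges E S)) / (real (card S) + real (card B))"
    using edges_S \<open>0 < card B\<close> by (simp add: pos_le_divide_eq)
  also have "\<dots> = avg_degree (S \<union> B) (incident_edges E S)"
    unfolding avg_degree_def card_SB by simp
  finally show ?thesis .
qed

end

theorem lemma12:
  fixes V A B :: "'a set" and E :: "'a set set" and d :: nat
  assumes "d \<ge> 2"
    and "graph V E"
    and "bipartite_with V E A B"
    and "card A \<ge> d ^ 6 * card B"
    and "\<And>x y. x \<in> B \<Longrightarrow> y \<in> B \<Longrightarrow> x \<noteq> y \<Longrightarrow> codegree E x y \<le> d"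
    and "\<And>v. v \<in> A \<Longrightarrow> degree E v \<le> d"
  shows "\<exists>V' E'. subgraph V' E' V E \<and> C4_free E' \<and> avg_degree V' E' \<ge> avg_degree V E / 5"
proof -
  interpret bipartite_graph V A B E
    using assms(2,3) by unfold_locales
  define c where "c = real (card E) / (5 * real (card V))"
  obtain S where "S \<subseteq> A" and no_share: "\<forall>a\<in>S. \<forall>a'\<in>S. a \<noteq> a' \<longrightarrow> \<not> share_two_nbrs E a a'"
    and weight: "(\<Sum>a\<in>A. real (degree E a) - c) \<le> real (d ^ 3 + 1) * (\<Sum>a\<in>S. real (degree E a) - c)"
    using exists_no_share_subset_weight_bound[where w = "\<lambda>a. real (degree E a) - c", OF assms(6,5)]
    by auto
  have "d ^ 3 \<le> d ^ 6"
    using assms(1) by (intro power_increasing) auto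
  then have "d ^ 3 * card B \<le> card A"
    using assms(4) by (meson mult_le_mono1 order.trans)
  then have "(d ^ 3 + 1) * card B \<le> 4 * card V"
    using card_V by simp
  then have "avg_degree V E / 5 \<le> avg_degree (S \<union> B) (incident_edges E S)"
    using avg_degree_incident_edges_ge[OF \<open>S \<subseteq> A\<close> _ _ c_def weight] by simp
  then show ?thesis
    using subgraph_incident_edges[OF \<open>S \<subseteq> A\<close>] C4_free_incident_edges[OF \<open>S \<subseteq> A\<close>] no_share
    by blast
qed

end
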